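(* Let $n\le k$ be positive integers and $\mathcal{A}$ a finite $\sigma$-structure. Then $\mathbb{H}_{n,k}\mathcal{A}$ has an extended tree decomposition of width $k$ and arity $n$ which is structured (with respect to $n$ and $k$).
   Context: For $m\in\mathbb{N}$, $[m]=\{1,\dots,m\}$. $\mathbb{T}_k\mathcal{A}$ has universe the nonempty finite lists over $A\times[k]$; $\epsilon_{\mathcal{A}}(s)$ is the first component of the last pair of $s$; $(s_1,\dots,s_r)\in R^{\mathbb{T}_k\mathcal{A}}$ iff the $s_i$ are pairwise prefix-comparable, $(\epsilon_{\mathcal{A}}(s_1),\dots,\epsilon_{\mathcal{A}}(s_r))\in R^{\mathcal{A}}$, and whenever $s_i$ is a prefix of $s_j$ ending with $(a,p)$, no prefix of $s_j$ properly extending $s_i$ ends with a pair $(a',p)$. A list over $A\times[k]$ is basic if it has at most $n$ pairs with distinct pebble indices; $S_n(s)=[s]$ if $s$ is basic, else $S_n(s)=[a];S_n(t)$ with $s=a\cdot t$ and $a$ the longest basic prefix. For $p\in[k]$ and $S_n(s)=t;[s']$ ($s'$ the last block), $\alpha_n(s,p)=t;[s']$ if $|s'|=n$ or $p$ occurs in $s'$, else $t$. $[s;(a,i)]\approx_n[t;(b,j)]$ iff $a=b$ and $\alpha_n(s,i)=\alpha_n(t,j)$. $\mathbb{H}_{n,k}\mathcal{A}=\mathbb{T}_k\mathcal{A}/{\approx_n}$, where a tuple of classes is related iff some choice of representatives is related in $\mathbb{T}_k\mathcal{A}$. A tree is a poset $(T,\le)$ with a least element in which each down-set is linearly ordered;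 $t'$ is a child of $t$ if $t<t'$ with nothing strictly between. A tree decomposition $(T,B)$ of a structure $\mathcal{C}$: every element lies in some bag, $\{t: c\in B(t)\}$ is connected for each $c$, and every related tuple lies in some bag. An extended tree decomposition of $\mathcal{C}$ is $(T,\beta,\gamma)$ with $\beta,\gamma:T\to 2^C$ such that $(T,B)$ with $B=\beta\cup\gamma$ is a tree decomposition and $c\in\gamma(t)$, $c\in B(t')$ imply $t\le t'$. Width: $\max_t|\beta(t)|$. Arity: least $n'\le$ width such that (i) $t<t'$ implies $|\beta(t')\cap\gamma(t)|\le n'$, and (ii) every related tuple $\bar c$ lies in some $B(t)$ with $|\bar c\cap\gamma(t)|\le n'$. Structured (with respect to $n,k$): every element lies in some $\gamma(t)$; $\gamma(t)\ne\emptyset$ for all $t$; $\beta(t')\cap\gamma(t)\ne\emptyset$ for each child $t'$ of $t$; and for each child $t'$ of $t$ and child $t''$ of $t'$, at least one of: $|\beta(t')\cap\gamma(t)|=n$; $|\beta(t')|<k$; $(\gamma(t)\cap\beta(t'))\setminus\beta(t'')\ne\emptyset$. *)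

theory Defs
  imports Main "HOL-Library.Sublist"
begin

definition sig_struct :: "('r \<Rightarrow> nat) \<Rightarrow> 'a set \<Rightarrow> ('r \<Rightarrow> 'a list set) \<Rightarrow> bool" where
  "sig_struct ar U I \<longleftrightarrow> (\<forall>R. \<forall>xs\<in>I R. length xs = ar R \<and> set xs \<subseteq> U)"

definition Tuniv :: "nat \<Rightarrow> 'a set \<Rightarrow> ('a \<times> nat) list set" where
  "Tuniv k A = {s. s \<noteq> [] \<and> set s \<subseteq> A \<times> {1..k}}"

definition eps :: "('a \<times> nat) list \<Rightarrow> 'a" where
  "eps s = fst (last s)"

definition Trel :: "nat \<Rightarrow> 'a set \<Rightarrow> ('r \<Rightarrow> 'a list set) \<Rightarrow> 'r \<Rightarrow> ('a \<times> nat) list list set" where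
  "Trel k A I R = {ss. set ss \<subseteq> Tuniv k A \<and>
     (\<forall>x\<in>set ss. \<forall>y\<in>set ss. prefix x y \<or> prefix y x) \<and>
     map eps ss \<in> I R \<and>
     (\<forall>x\<in>set ss. \<forall>y\<in>set ss. prefix x y \<longrightarrow>
        (\<forall>u. prefix x u \<and> prefix u y \<and> u \<noteq> x \<longrightarrow> snd (last u) \<noteq> snd (last x)))}"

definition basic :: "nat \<Rightarrow> ('a \<times> nat) list \<Rightarrow> bool" where
  "basic n s \<longleftrightarrow> length s \<le> n \<and> distinct (map snd s)"

definition lbp :: "nat \<Rightarrow> ('a \<times> nat) list \<Rightarrow> ('a \<times> nat) list" where
  "lbp n s = take (GREATEST m. m \<le> length s \<and> basic n (take m s)) s"

text \<open>S_n. The guard "lbp n s = []" can only fire for n = 0 (for n \<ge> 1 every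
  singleton is basic); it only serves to make the function total.\<close>
function blocks :: "nat \<Rightarrow> ('a \<times> nat) list \<Rightarrow> ('a \<times> nat) list list" where
  "blocks n s = (if basic n s then [s]
                 else if lbp n s = [] then [s]
                 else lbp n s # blocks n (drop (length (lbp n s)) s))"
  by pat_completeness auto
termination
  by (relation "measure (\<lambda>(n, s). length s)") (auto simp: lbp_def basic_def)

definition alpha :: "nat \<Rightarrow> ('a \<times> nat) list \<Rightarrow> nat \<Rightarrow> ('a \<times> nat) list list" where
  "alpha n s p = (let B = blocks n s; s' = last B in
     if length s' = n \<or> p \<in> snd ` set s' then B else butlast B)"

definition approx :: "nat \<Rightarrow> ('a \<times> nat) list \<Rightarrow> ('a \<times> nat) list \<Rightarrow> bool" where
  "approx n x y \<longleftrightarrow> x \<noteq> [] \<and> y \<noteq> [] \<and> fst (last x) = fst (last y) \<and>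
     alpha n (butlast x) (snd (last x)) = alpha n (butlast y) (snd (last y))"

definition Heq :: "nat \<Rightarrow> nat \<Rightarrow> 'a set \<Rightarrow> (('a \<times> nat) list \<times> ('a \<times> nat) list) set" where
  "Heq n k A = {(x, y). x \<in> Tuniv k A \<and> y \<in> Tuniv k A \<and> approx n x y}"

definition Huniv :: "nat \<Rightarrow> nat \<Rightarrow> 'a set \<Rightarrow> ('a \<times> nat) list set set" where
  "Huniv n k A = Tuniv k A // Heq n k A"

definition Hrel :: "nat \<Rightarrow> nat \<Rightarrow> 'a set \<Rightarrow> ('r \<Rightarrow> 'a list set) \<Rightarrow> 'r
                    \<Rightarrow> ('a \<times> nat) list set list set" where
  "Hrel n k A I R = {cs. set cs \<subseteq> Huniv n k A \<and>
      (\<exists>ss\<in>Trel k A I R. list_all2 (\<in>) ss cs)}"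

definition is_tree :: "'t set \<Rightarrow> ('t \<Rightarrow> 't \<Rightarrow> bool) \<Rightarrow> bool" where
  "is_tree T le \<longleftrightarrow>
     (\<forall>x\<in>T. le x x) \<and>
     (\<forall>x\<in>T. \<forall>y\<in>T. le x y \<and> le y x \<longrightarrow> x = y) \<and>
     (\<forall>x\<in>T. \<forall>y\<in>T. \<forall>z\<in>T. le x y \<and> le y z \<longrightarrow> le x z) \<and>
     (\<exists>r\<in>T. \<forall>t\<in>T. le r t) \<and>
     (\<forall>t\<in>T. \<forall>x\<in>T. \<forall>y\<in>T. le x t \<and> le y t \<longrightarrow> le x y \<or> le y x)"

definition tree_less :: "('t \<Rightarrow> 't \<Rightarrow> bool) \<Rightarrow> 't \<Rightarrow> 't \<Rightarrow> bool" where
  "tree_less le x y \<longleftrightarrow> le x y \<and> x \<noteq> y"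

definition tree_child :: "'t set \<Rightarrow> ('t \<Rightarrow> 't \<Rightarrow> bool) \<Rightarrow> 't \<Rightarrow> 't \<Rightarrow> bool" where
  "tree_child T le t t' \<longleftrightarrow> t \<in> T \<and> t' \<in> T \<and> tree_less le t t' \<and>
     \<not> (\<exists>u\<in>T. tree_less le t u \<and> tree_less le u t')"

definition tree_connected :: "'t set \<Rightarrow> ('t \<Rightarrow> 't \<Rightarrow> bool) \<Rightarrow> 't set \<Rightarrow> bool" where
  "tree_connected T le S \<longleftrightarrow> S \<subseteq> T \<and>
     (\<forall>x\<in>S. \<forall>y\<in>S. (x, y) \<in>
        {(u, v). u \<in> S \<and> v \<in> S \<and> (tree_child T le u v \<or> tree_child T le v u)}\<^sup>*)"

definition tree_decomp :: "'c set \<Rightarrow> ('r \<Rightarrow> 'c list set) \<Rightarrow> 't set \<Rightarrow> ('t \<Rightarrow> 't \<Rightarrow> bool)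
                           \<Rightarrow> ('t \<Rightarrow> 'c set) \<Rightarrow> bool" where
  "tree_decomp C I T le B \<longleftrightarrow> is_tree T le \<and>
     (\<forall>t\<in>T. B t \<subseteq> C) \<and>
     (\<forall>c\<in>C. \<exists>t\<in>T. c \<in> B t) \<and>
     (\<forall>c\<in>C. tree_connected T le {t\<in>T. c \<in> B t}) \<and>
     (\<forall>R. \<forall>cs\<in>I R. \<exists>t\<in>T. set cs \<subseteq> B t)"

definition ext_tree_decomp :: "'c set \<Rightarrow> ('r \<Rightarrow> 'c list set) \<Rightarrow> 't set \<Rightarrow> ('t \<Rightarrow> 't \<Rightarrow> bool)
                           \<Rightarrow> ('t \<Rightarrow> 'c set) \<Rightarrow> ('t \<Rightarrow> 'c set) \<Rightarrow> bool" where
  "ext_tree_decomp C I T le \<beta> \<gamma> \<longleftrightarrow>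
     (\<forall>t\<in>T. \<beta> t \<subseteq> C \<and> \<gamma> t \<subseteq> C) \<and>
     tree_decomp C I T le (\<lambda>t. \<beta> t \<union> \<gamma> t) \<and>
     (\<forall>t\<in>T. \<forall>t'\<in>T. \<forall>c. c \<in> \<gamma> t \<and> c \<in> \<beta> t' \<union> \<gamma> t' \<longrightarrow> le t t')"

text \<open>Width: max over nodes of |beta(t)| (meaningful when all beta-bags are finite
  of bounded size).\<close>
definition etd_width :: "'t set \<Rightarrow> ('t \<Rightarrow> 'c set) \<Rightarrow> nat" where
  "etd_width T \<beta> = Max ((\<lambda>t. card (\<beta> t)) ` T)"

definition etd_width_le :: "'t set \<Rightarrow> ('t \<Rightarrow> 'c set) \<Rightarrow> nat \<Rightarrow> bool" where
  "etd_width_le T \<beta> k \<longleftrightarrow> (\<forall>t\<in>T. finite (\<beta> t) \<and> card (\<beta> t) \<le> k)"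

definition arity_cond :: "'t set \<Rightarrow> ('t \<Rightarrow> 't \<Rightarrow> bool) \<Rightarrow> ('t \<Rightarrow> 'c set) \<Rightarrow> ('t \<Rightarrow> 'c set)
                          \<Rightarrow> ('r \<Rightarrow> 'c list set) \<Rightarrow> nat \<Rightarrow> bool" where
  "arity_cond T le \<beta> \<gamma> I m \<longleftrightarrow>
     (\<forall>t\<in>T. \<forall>t'\<in>T. tree_less le t t' \<longrightarrow> card (\<beta> t' \<inter> \<gamma> t) \<le> m) \<and>
     (\<forall>R. \<forall>cs\<in>I R. \<exists>t\<in>T. set cs \<subseteq> \<beta> t \<union> \<gamma> t \<and> card (set cs \<inter> \<gamma> t) \<le> m)"

text \<open>arity at most n: the least m \<le> width satisfying (i),(ii) exists and is \<le> n\<close>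
definition etd_arity_le :: "'t set \<Rightarrow> ('t \<Rightarrow> 't \<Rightarrow> bool) \<Rightarrow> ('t \<Rightarrow> 'c set) \<Rightarrow> ('t \<Rightarrow> 'c set)
                          \<Rightarrow> ('r \<Rightarrow> 'c list set) \<Rightarrow> nat \<Rightarrow> bool" where
  "etd_arity_le T le \<beta> \<gamma> I n \<longleftrightarrow>
     (\<exists>m\<le>n. m \<le> etd_width T \<beta> \<and> arity_cond T le \<beta> \<gamma> I m)"

definition structured :: "nat \<Rightarrow> nat \<Rightarrow> 'c set \<Rightarrow> 't set \<Rightarrow> ('t \<Rightarrow> 't \<Rightarrow> bool)
                          \<Rightarrow> ('t \<Rightarrow> 'c set) \<Rightarrow> ('t \<Rightarrow> 'c set) \<Rightarrow> bool" where
  "structured n k C T le \<beta> \<gamma> \<longleftrightarrow>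
     (\<forall>c\<in>C. \<exists>t\<in>T. c \<in> \<gamma> t) \<and>
     (\<forall>t\<in>T. \<gamma> t \<noteq> {}) \<and>
     (\<forall>t t'. tree_child T le t t' \<longrightarrow> \<beta> t' \<inter> \<gamma> t \<noteq> {}) \<and>
     (\<forall>t t' t''. tree_child T le t t' \<and> tree_child T le t' t'' \<longrightarrow>
        card (\<beta> t' \<inter> \<gamma> t) = n \<or> card (\<beta> t') < k \<or> (\<gamma> t \<inter> \<beta> t') - \<beta> t'' \<noteq> {})"

end

theory Submission
  imports Defs
begin

text \<open>
  Up to \<open>\<approx>\<^sub>n\<close>, a list \<open>x\<close> is determined by the first component of its last pair together with
  all blocks of \<open>S\<^sub>n(x)\<close> except the last one.  The nodes of the decomposition are therefore the
  block sequences \<open>P\<close> produced by \<open>S\<^sub>n\<close>, ordered by prefix; \<open>\<gamma>(P)\<close> holds the classes whose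
  remaining blocks are exactly \<open>P\<close>, and \<open>\<beta>(P)\<close> the classes of those prefixes of \<open>concat P\<close> that
  end with the last occurrence of a pebble.  Every pebble has a single last occurrence, so
  \<open>|\<beta>(P)| \<le> k\<close>; a related tuple lies in \<open>\<beta>\<close> of the blocks of its longest member, because the
  pebble condition of \<open>\<T>\<^sub>k\<close> makes every member end at a last occurrence; and a class of \<open>\<gamma>(t)\<close>
  meets \<open>\<beta>(t')\<close> only through the block of \<open>t'\<close> right after \<open>t\<close>, which has at most \<open>n\<close> pairs.
  For structuredness: if \<open>\<beta>(t b)\<close> is full, the positions of \<open>b\<close> yield \<open>|b|\<close> distinct classes; if
  moreover \<open>|b| < n\<close>, the first pebble of the next block \<open>b'\<close> already occurs in \<open>b\<close> (otherwise
  \<open>b\<close> would have absorbed it), and that occurrence is no longer a last one in \<open>t b b'\<close>.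
\<close>

section \<open>Greedy block decompositions\<close>

declare blocks.simps [simp del]

definition greedy_blocks :: "nat \<Rightarrow> ('a \<times> nat) list list \<Rightarrow> bool" where
  "greedy_blocks n P \<longleftrightarrow> (\<forall>b\<in>set P. b \<noteq> [] \<and> basic n b) \<and>
     successively (\<lambda>b c. \<not> basic n (b @ [hd c])) P"

lemma basic_Nil [simp]: "basic n []"
  by (simp add: basic_def)

lemma basic_singleton [simp]: "basic n [p] \<longleftrightarrow> 0 < n"
  by (auto simp: basic_def)

lemma basic_take: "basic n b \<Longrightarrow> basic n (take m b)"
  by (auto simp: basic_def take_map [symmetric] distinct_take)

lemma basic_snoc_iff: "basic n (b @ [(a, i)]) \<longleftrightarrow> length b < n \<and> basic n b \<and> i \<notin> snd ` set b"
  by (auto simp: basic_def)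

lemma greedy_blocks_Nil [simp]: "greedy_blocks n []"
  by (simp add: greedy_blocks_def)

lemma greedy_blocks_Cons:
  "greedy_blocks n (b # Q) \<longleftrightarrow>
     b \<noteq> [] \<and> basic n b \<and> greedy_blocks n Q \<and> (Q \<noteq> [] \<longrightarrow> \<not> basic n (b @ [hd (hd Q)]))"
  by (auto simp: greedy_blocks_def successively_Cons)

lemma greedy_blocks_append:
  "greedy_blocks n (P @ Q) \<longleftrightarrow> greedy_blocks n P \<and> greedy_blocks n Q \<and>
     (P = [] \<or> Q = [] \<or> \<not> basic n (last P @ [hd (hd Q)]))"
  by (auto simp: greedy_blocks_def successively_append_iff)

lemma greedy_blocks_singleton [simp]: "greedy_blocks n [b] \<longleftrightarrow> b \<noteq> [] \<and> basic n b"
  by (simp add: greedy_blocks_def)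

lemma greedy_blocks_take: "greedy_blocks n P \<Longrightarrow> greedy_blocks n (take j P)"
  using greedy_blocks_append [of n "take j P" "drop j P"] by simp

lemma greedy_blocks_nth:
  "greedy_blocks n P \<Longrightarrow> j < length P \<Longrightarrow> P ! j \<noteq> [] \<and> basic n (P ! j)"
  by (simp add: greedy_blocks_def)

lemma greedy_blocks_first_maximal:
  assumes "greedy_blocks n (b # P)" and "greedy_blocks n (c # Q)" and "b @ concat P = c @ concat Q"
  shows "length c \<le> length b"
proof (rule ccontr)
  assume "\<not> length c \<le> length b"
  then have "P \<noteq> []"
    using assms(3) by (cases P) auto
  then obtain b' P' where P: "P = b' # P'" and "b' \<noteq> []"
    using assms(1) by (cases P) (auto simp: greedy_blocks_Cons)
  then have "b @ [hd b'] = take (Suc (length b)) (b @ concat P)"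
    by (cases b') auto
  also have "\<dots> = take (Suc (length b)) c"
    using assms(3) \<open>\<not> length c \<le> length b\<close> by simp
  finally have "basic n (b @ [hd b'])"
    using assms(2) basic_take by (metis greedy_blocks_Cons)
  then show False
    using assms(1) P by (simp add: greedy_blocks_Cons)
qed

lemma greedy_blocks_unique:
  "greedy_blocks n P \<Longrightarrow> greedy_blocks n Q \<Longrightarrow> concat P = concat Q \<Longrightarrow> P = Q"
proof (induction P arbitrary: Q)
  case Nil
  then show ?case
    by (cases Q) (auto simp: greedy_blocks_Cons)
next
  case (Cons b P)
  then obtain c Q' where Q: "Q = c # Q'"
    by (cases Q) (auto simp: greedy_blocks_Cons)
  then have "length b = length c"
    using Cons.prems greedy_blocks_first_maximal by (metis concat.simps(2) le_antisym)
  then have "b = c" and "concat P = concat Q'"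
    using Cons.prems Q by auto
  then show ?case
    using Cons Q by (auto simp: greedy_blocks_Cons)
qed

lemma concat_blocks: "concat (blocks n s) = s"
proof (induction n s rule: blocks.induct)
  case (1 n s)
  then show ?case
    by (subst blocks.simps) (auto simp: lbp_def min_def)
qed

lemma blocks_ne [simp]: "blocks n s \<noteq> []"
  by (subst blocks.simps) auto

lemma longest_basic_prefix:
  assumes "0 < n" and "s \<noteq> []" and "\<not> basic n s"
  obtains m where "lbp n s = take m s" and "0 < m" and "m < length s"
    and "basic n (take m s)" and "\<not> basic n (take (Suc m) s)"
proof -
  let ?P = "\<lambda>m. m \<le> length s \<and> basic n (take m s)"
  define m where "m = (GREATEST m. ?P m)"
  have bound: "\<forall>m. ?P m \<longrightarrow> m \<le> length s"
    by simp
  have one: "?P 1"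
    using assms(1,2) by (cases s) auto
  have "?P m"
    unfolding m_def using GreatestI_nat [of ?P, OF one] bound by blast
  moreover have "0 < m"
    unfolding m_def using Greatest_le_nat [of ?P, OF one] bound by fastforce
  moreover have "m < length s"
    using \<open>?P m\<close> assms(3) by (metis le_neq_implies_less take_all_iff)
  moreover have "\<not> basic n (take (Suc m) s)"
    using Greatest_le_nat [of ?P "Suc m"] \<open>m < length s\<close> bound unfolding m_def [symmetric] by auto
  ultimately show ?thesis
    using that by (simp add: lbp_def m_def)
qed

lemma greedy_blocks_blocks:
  assumes "0 < n" and "s \<noteq> []"
  shows "greedy_blocks n (blocks n s)"
  using assms
proof (induction n s rule: blocks.induct)
  case (1 n s)
  show ?case
  proof (cases "basic n s")
    case True
    then show ?thesis
      using "1.prems" by (subst blocks.simps) simp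
  next
    case False
    then obtain m where m: "lbp n s = take m s" "0 < m" "m < length s"
      "basic n (take m s)" "\<not> basic n (take (Suc m) s)"
      using longest_basic_prefix "1.prems" by blast
    then have "lbp n s \<noteq> []"
      using "1.prems" by simp
    then have IH: "greedy_blocks n (blocks n (drop m s))"
      using "1.IH" "1.prems" False m(1,3) by simp
    obtain c R where cR: "blocks n (drop m s) = c # R"
      by (cases "blocks n (drop m s)") auto
    then have "c \<noteq> []"
      using IH by (simp add: greedy_blocks_Cons)
    then have "hd c = hd (drop m s)"
      using concat_blocks [of n "drop m s"] cR by (metis concat.simps(2) hd_append2)
    then have "take (Suc m) s = take m s @ [hd c]"
      using m(3) by (simp add: take_Suc_conv_app_nth hd_drop_conv_nth)
    then show ?thesis
      using False m IH cR by (subst blocks.simps) (auto simp: greedy_blocks_Cons)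
  qed
qed

lemma blocks_concat: "0 < n \<Longrightarrow> greedy_blocks n P \<Longrightarrow> P \<noteq> [] \<Longrightarrow> blocks n (concat P) = P"
proof -
  assume "0 < n" and P: "greedy_blocks n P" "P \<noteq> []"
  then have "concat P \<noteq> []"
    by (cases P) (auto simp: greedy_blocks_Cons)
  then show ?thesis
    using greedy_blocks_blocks [OF \<open>0 < n\<close>] greedy_blocks_unique P(1) concat_blocks by metis
qed

lemma blocks_snoc:
  assumes "0 < n" and "s \<noteq> []"
  shows "blocks n (s @ [p]) =
    (if basic n (last (blocks n s) @ [p]) then butlast (blocks n s) @ [last (blocks n s) @ [p]]
     else blocks n s @ [[p]])"
proof -
  define P where "P = blocks n s"
  have P: "greedy_blocks n P" "concat P = s" "P \<noteq> []"
    using greedy_blocks_blocks [OF assms] concat_blocks by (auto simp: P_def)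
  then obtain P0 b where Pb: "P = P0 @ [b]"
    by (metis rev_exhaust)
  show ?thesis
  proof (cases "basic n (b @ [p])")
    case True
    have "greedy_blocks n (P0 @ [b @ [p]])"
      using P(1) True by (cases b) (auto simp: Pb greedy_blocks_append)
    then have "blocks n (s @ [p]) = P0 @ [b @ [p]]"
      using blocks_concat [OF assms(1)] P(2) Pb by fastforce
    then show ?thesis
      using True by (simp add: P_def [symmetric] Pb)
  next
    case False
    have "greedy_blocks n (P @ [[p]])"
      using P(1,3) False assms(1) by (simp add: greedy_blocks_append greedy_blocks_Cons Pb)
    then have "blocks n (s @ [p]) = P @ [[p]]"
      using blocks_concat [OF assms(1)] P(2) by fastforce
    then show ?thesis
      using False by (simp add: P_def [symmetric] Pb)
  qed
qed

lemma alpha_eq_butlast_blocks: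
  assumes "0 < n" and "x \<noteq> []"
  shows "alpha n (butlast x) (snd (last x)) = butlast (blocks n x)"
proof -
  obtain s a i where x: "x = s @ [(a, i)]"
    using assms(2) by (metis rev_exhaust surj_pair)
  show ?thesis
  proof (cases "s = []")
    case True
    have "blocks n s = [[]]" and "blocks n x = [[(a, i)]]"
      using assms(1) x True by (subst blocks.simps, simp)+
    then show ?thesis
      using assms(1) x True by (simp add: alpha_def Let_def)
  next
    case False
    have "basic n (last (blocks n s))"
      using greedy_blocks_blocks [OF assms(1) False] by (simp add: greedy_blocks_def)
    moreover have "length (last (blocks n s)) \<le> n"
      using calculation by (simp add: basic_def)
    ultimately show ?thesis
      using x blocks_snoc [OF assms(1) False, of "(a, i)"]
      by (auto simp: alpha_def Let_def basic_snoc_iff butlast_append)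
  qed
qed

lemma approx_iff:
  "0 < n \<Longrightarrow> approx n x y \<longleftrightarrow> x \<noteq> [] \<and> y \<noteq> [] \<and> fst (last x) = fst (last y) \<and>
     butlast (blocks n x) = butlast (blocks n y)"
  by (auto simp: approx_def alpha_eq_butlast_blocks)

section \<open>Positions in a concatenation of blocks\<close>

definition block_start :: "'b list list \<Rightarrow> nat \<Rightarrow> nat" where
  "block_start P j = length (concat (take j P))"

lemma block_start_Suc: "j < length P \<Longrightarrow> block_start P (Suc j) = block_start P j + length (P ! j)"
  by (simp add: block_start_def take_Suc_conv_app_nth)

lemma block_start_mono: "j \<le> j' \<Longrightarrow> block_start P j \<le> block_start P j'"
proof -
  assume "j \<le> j'"
  then have "prefix (take j P) (take j' P)"
    by (metis min.absorb1 take_is_prefix take_take)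
  then have "prefix (concat (take j P)) (concat (take j' P))"
    by (metis concat_append prefix_def)
  then show ?thesis
    by (simp add: block_start_def prefix_length_le)
qed

lemma block_index_exists:
  "0 < l \<Longrightarrow> l \<le> length (concat P) \<Longrightarrow>
     \<exists>j<length P. block_start P j < l \<and> l \<le> block_start P (Suc j)"
proof (induction P arbitrary: l)
  case Nil
  then show ?case by simp
next
  case (Cons b P)
  show ?case
  proof (cases "l \<le> length b")
    case True
    then show ?thesis
      using Cons.prems by (intro exI [of _ 0]) (simp add: block_start_def)
  next
    case False
    then have "\<exists>j<length P. block_start P j < l - length b \<and> l - length b \<le> block_start P (Suc j)"
      using Cons.IH [of "l - length b"] Cons.prems(2) by simp
    then obtain j where "j < length P" "block_start P j < l - length b"
      "l - length b \<le> block_start P (Suc j)"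
      by blast
    then show ?thesis
      using False by (intro exI [of _ "Suc j"]) (auto simp: block_start_def)
  qed
qed

lemma take_concat_block:
  assumes "j < length P" and "block_start P j < l" and "l \<le> block_start P (Suc j)"
  shows "take l (concat P) = concat (take j P) @ take (l - block_start P j) (P ! j)"
proof -
  have "concat P = concat (take j P) @ P ! j @ concat (drop (Suc j) P)"
    using assms(1) by (metis append_take_drop_id concat.simps(2) concat_append Cons_nth_drop_Suc)
  moreover have "l - block_start P j \<le> length (P ! j)"
    using assms(3) block_start_Suc [OF assms(1)] by simp
  ultimately show ?thesis
    using assms(2) by (simp add: block_start_def)
qed

lemma butlast_blocks_take_concat:
  assumes "0 < n" and "greedy_blocks n P"
    and "j < length P" and "block_start P j < l" and "l \<le> block_start P (Suc j)"
  shows "butlast (blocks n (take l (concat P))) = take j P"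
proof -
  define c where "c = take (l - block_start P j) (P ! j)"
  have "P ! j \<noteq> []" and "basic n (P ! j)"
    using greedy_blocks_nth [OF assms(2,3)] by auto
  moreover have "greedy_blocks n (take j P @ [P ! j])"
    using greedy_blocks_take [OF assms(2), of "Suc j"] assms(3) by (simp add: take_Suc_conv_app_nth)
  ultimately have "greedy_blocks n (take j P @ [c])"
    using assms(4) basic_take
    by (cases "take j P = []") (auto simp: c_def greedy_blocks_append hd_take)
  then have "blocks n (take l (concat P)) = take j P @ [c]"
    using blocks_concat [OF assms(1)] take_concat_block [OF assms(3-5)] by (fastforce simp: c_def)
  then show ?thesis
    by simp
qed

section \<open>Last occurrences of pebbles\<close>

text \<open>Positions are counted by prefix length: \<open>l\<close> stands for the pair \<open>X ! (l - 1)\<close>.\<close>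

definition last_occs :: "('b \<times> 'p) list \<Rightarrow> nat set" where
  "last_occs X = {l. 0 < l \<and> l \<le> length X \<and> snd (X ! (l - 1)) \<notin> snd ` set (drop l X)}"

lemma finite_last_occs: "finite (last_occs X)"
  by (rule finite_subset [of _ "{..length X}"]) (auto simp: last_occs_def)

lemma last_occs_bounds: "l \<in> last_occs X \<Longrightarrow> 0 < l \<and> l \<le> length X"
  by (simp add: last_occs_def)

lemma nth_in_set_drop: "l \<le> p \<Longrightarrow> p < length X \<Longrightarrow> X ! p \<in> set (drop l X)"
proof -
  assume "l \<le> p" "p < length X"
  then have "drop l X ! (p - l) = X ! p" and "p - l < length (drop l X)"
    by simp_all
  then show ?thesis
    by (metis nth_mem)
qed

lemma inj_on_last_occs: "inj_on (\<lambda>l. snd (X ! (l - 1))) (last_occs X)"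
proof -
  have "l = l'"
    if "l \<in> last_occs X" "l' \<in> last_occs X" "snd (X ! (l - 1)) = snd (X ! (l' - 1))" "l \<le> l'"
    for l l'
  proof (rule ccontr)
    assume "l \<noteq> l'"
    then have "X ! (l' - 1) \<in> set (drop l X)"
      using that last_occs_bounds [OF that(2)] by (intro nth_in_set_drop) auto
    then show False
      using that(1,3) by (force simp: last_occs_def)
  qed
  then show ?thesis
    by (intro inj_onI) (metis le_cases)
qed

lemma card_last_occs_le: "card (last_occs X) \<le> card (snd ` set X)"
proof -
  have "card (last_occs X) = card ((\<lambda>l. snd (X ! (l - 1))) ` last_occs X)"
    by (rule card_image [OF inj_on_last_occs, symmetric])
  also have "\<dots> \<le> card (snd ` set X)"
    by (rule card_mono) (auto dest!: last_occs_bounds)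
  finally show ?thesis .
qed

lemma last_occs_append_le:
  assumes "l \<in> last_occs (X @ Y)" and "l \<le> length X"
  shows "l \<in> last_occs X"
proof -
  have "l - 1 < length X"
    using assms last_occs_bounds by fastforce
  then have "(X @ Y) ! (l - 1) = X ! (l - 1)"
    by (simp add: nth_append)
  then show ?thesis
    using assms by (auto simp: last_occs_def)
qed

lemma last_occs_distinct_suffix:
  assumes "distinct (map snd b)"
  shows "{length X <.. length X + length b} \<subseteq> last_occs (X @ b)"
proof
  fix l
  assume "l \<in> {length X <.. length X + length b}"
  then obtain i where i: "l = length X + Suc i" "i < length b"
    using less_imp_Suc_add by fastforce
  have "distinct (map snd (drop i b))"
    using distinct_drop [OF assms, of i] by (simp add: drop_map)
  moreover have "drop i b = b ! i # drop (Suc i) b"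
    using Cons_nth_drop_Suc [OF i(2)] by simp
  ultimately have "snd (b ! i) \<notin> snd ` set (drop (Suc i) b)"
    by simp
  moreover have "(X @ b) ! (l - 1) = b ! i" and "drop l (X @ b) = drop (Suc i) b"
    using i by (simp_all add: nth_append)
  ultimately show "l \<in> last_occs (X @ b)"
    using i by (simp add: last_occs_def)
qed

lemma last_occs_prefix:
  assumes "y \<noteq> []" and "prefix y x"
    and "\<forall>u. prefix y u \<and> prefix u x \<and> u \<noteq> y \<longrightarrow> snd (last u) \<noteq> snd (last y)"
  shows "length y \<in> last_occs x"
proof (rule ccontr)
  obtain z where x: "x = y @ z"
    using assms(2) by (auto simp: prefix_def)
  assume "length y \<notin> last_occs x"
  then have "snd (last y) \<in> snd ` set z"
    using assms(1) x by (auto simp: last_occs_def nth_append last_conv_nth)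
  then obtain q where "q < length z" and "snd (z ! q) = snd (last y)"
    by (metis imageE in_set_conv_nth)
  moreover have "prefix (y @ take (Suc q) z) x"
    using x by (simp add: take_is_prefix)
  ultimately have "prefix y (y @ take (Suc q) z)" and "prefix (y @ take (Suc q) z) x"
    and "y @ take (Suc q) z \<noteq> y" and "snd (last (y @ take (Suc q) z)) = snd (last y)"
    by (auto simp: take_Suc_conv_app_nth)
  then show False
    using assms(3) by blast
qed

lemma last_occs_append_not:
  assumes "0 < l" and "l \<le> length X" and "snd (X ! (l - 1)) \<in> snd ` set Y"
  shows "l \<notin> last_occs (X @ Y)"
proof -
  have "set Y \<subseteq> set (drop l (X @ Y))"
    using assms(2) by simp
  then show ?thesis
    using assms by (auto simp: last_occs_def nth_append)
qed

section \<open>The decomposition\<close>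

locale pebble_quotient =
  fixes n k :: nat and A :: "'a set"
  assumes n_pos: "0 < n"
begin

definition hclass :: "('a \<times> nat) list \<Rightarrow> ('a \<times> nat) list set" where
  "hclass x = Heq n k A `` {x}"

lemma hclass_eq:
  "x \<in> Tuniv k A \<Longrightarrow> hclass x =
     {y \<in> Tuniv k A. fst (last y) = fst (last x) \<and> butlast (blocks n y) = butlast (blocks n x)}"
  by (auto simp: hclass_def Heq_def approx_iff [OF n_pos] Tuniv_def)

lemma hclass_eq_iff:
  "x \<in> Tuniv k A \<Longrightarrow> y \<in> Tuniv k A \<Longrightarrow>
     hclass x = hclass y \<longleftrightarrow> fst (last x) = fst (last y) \<and> butlast (blocks n x) = butlast (blocks n y)"
  by (auto simp: hclass_eq)

lemma hclass_in_Huniv: "x \<in> Tuniv k A \<Longrightarrow> hclass x \<in> Huniv n k A"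
  by (simp add: hclass_def Huniv_def quotientI)

lemma Huniv_hclass: "c \<in> Huniv n k A \<Longrightarrow> \<exists>x\<in>Tuniv k A. c = hclass x"
  by (auto simp: hclass_def Huniv_def quotient_def)

lemma Huniv_mem_hclass: "c \<in> Huniv n k A \<Longrightarrow> y \<in> c \<Longrightarrow> y \<in> Tuniv k A \<and> c = hclass y"
  by (fastforce simp: hclass_eq dest: Huniv_hclass)

definition nodes :: "('a \<times> nat) list list set" where
  "nodes = {P. greedy_blocks n P \<and> set (concat P) \<subseteq> A \<times> {1..k}}"

definition beta :: "('a \<times> nat) list list \<Rightarrow> ('a \<times> nat) list set set" where
  "beta P = (\<lambda>l. hclass (take l (concat P))) ` last_occs (concat P)"

definition gamma :: "('a \<times> nat) list list \<Rightarrow> ('a \<times> nat) list set set" where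
  "gamma P = {hclass x | x. x \<in> Tuniv k A \<and> butlast (blocks n x) = P}"

lemma Nil_in_nodes: "[] \<in> nodes"
  by (simp add: nodes_def)

lemma nodes_take: "P \<in> nodes \<Longrightarrow> take j P \<in> nodes"
proof -
  assume "P \<in> nodes"
  moreover have "set (concat (take j P)) \<subseteq> set (concat P)"
    by (metis append_take_drop_id concat_append set_append sup_ge1)
  ultimately show ?thesis
    using greedy_blocks_take unfolding nodes_def by blast
qed

lemma nodes_butlast: "P \<in> nodes \<Longrightarrow> butlast P \<in> nodes"
  using nodes_take [of P "length P - 1"] by (simp add: butlast_conv_take)

lemma blocks_in_nodes: "x \<in> Tuniv k A \<Longrightarrow> blocks n x \<in> nodes"
  using greedy_blocks_blocks [OF n_pos] concat_blocks [of n x]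
  unfolding nodes_def Tuniv_def by (auto simp del: set_concat)

lemma take_concat_in_Tuniv:
  assumes "P \<in> nodes" and "0 < l" and "l \<le> length (concat P)"
  shows "take l (concat P) \<in> Tuniv k A"
proof -
  have "take l (concat P) \<noteq> []"
    using assms(2,3) by (metis gr_implies_not0 le_zero_eq list.size(3) take_eq_Nil)
  moreover have "set (take l (concat P)) \<subseteq> A \<times> {1..k}"
    using assms(1) set_take_subset [of l "concat P"] unfolding nodes_def by blast
  ultimately show ?thesis
    by (simp add: Tuniv_def)
qed

lemma is_tree_nodes: "is_tree nodes prefix"
  unfolding is_tree_def
proof (intro conjI)
  show "\<exists>r\<in>nodes. \<forall>t\<in>nodes. prefix r t"
    using Nil_in_nodes Nil_prefix by blast
  show "\<forall>t\<in>nodes. \<forall>x\<in>nodes. \<forall>y\<in>nodes. prefix x t \<and> prefix y t \<longrightarrow> prefix x y \<or> prefix y x"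
    by (metis prefix_same_cases)
qed (auto intro: prefix_order.trans prefix_order.antisym)

lemma tree_child_nodes_iff:
  "tree_child nodes prefix t t' \<longleftrightarrow> t \<in> nodes \<and> t' \<in> nodes \<and> (\<exists>b. t' = t @ [b])"
proof
  assume child: "tree_child nodes prefix t t'"
  then obtain d where d: "t' = t @ d" "d \<noteq> []" and nodes: "t \<in> nodes" "t' \<in> nodes"
    by (auto simp: tree_child_def tree_less_def prefix_def)
  have "length d = 1"
  proof (rule ccontr)
    assume "length d \<noteq> 1"
    then have "tree_less prefix t (take (Suc (length t)) t')"
      and "tree_less prefix (take (Suc (length t)) t') t'"
      using d by (auto simp: tree_less_def take_is_prefix Suc_le_eq neq_Nil_conv)
    then show False
      using child nodes_take [OF nodes(2)] by (auto simp: tree_child_def)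
  qed
  then show "t \<in> nodes \<and> t' \<in> nodes \<and> (\<exists>b. t' = t @ [b])"
    using d nodes by (auto simp: length_Suc_conv)
next
  assume "t \<in> nodes \<and> t' \<in> nodes \<and> (\<exists>b. t' = t @ [b])"
  then show "tree_child nodes prefix t t'"
    by (auto simp: tree_child_def tree_less_def prefix_snoc dest: prefix_order.antisym)
qed

lemma beta_subset_Huniv: "P \<in> nodes \<Longrightarrow> beta P \<subseteq> Huniv n k A"
  by (auto simp: beta_def intro!: hclass_in_Huniv take_concat_in_Tuniv dest: last_occs_bounds)

lemma gamma_subset_Huniv: "gamma P \<subseteq> Huniv n k A"
  by (auto simp: gamma_def intro!: hclass_in_Huniv)

lemma finite_beta: "finite (beta P)"
  by (simp add: beta_def finite_last_occs)

lemma card_last_occs_nodes: "P \<in> nodes \<Longrightarrow> card (last_occs (concat P)) \<le> k"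
proof -
  assume "P \<in> nodes"
  then have "snd ` set (concat P) \<subseteq> {1..k}"
    by (auto simp: nodes_def)
  then have "card (snd ` set (concat P)) \<le> k"
    using card_mono [of "{1..k}"] by fastforce
  then show ?thesis
    using card_last_occs_le le_trans by blast
qed

lemma card_beta_le: "P \<in> nodes \<Longrightarrow> card (beta P) \<le> k"
  unfolding beta_def using card_image_le [OF finite_last_occs] card_last_occs_nodes le_trans by blast

lemma hclass_in_gamma: "x \<in> Tuniv k A \<Longrightarrow> hclass x \<in> gamma (butlast (blocks n x))"
  by (auto simp: gamma_def)

lemma gamma_unique: "c \<in> gamma P \<Longrightarrow> c \<in> gamma Q \<Longrightarrow> P = Q"
  by (auto simp: gamma_def hclass_eq_iff)

lemma Huniv_in_gamma: "c \<in> Huniv n k A \<Longrightarrow> \<exists>t\<in>nodes. c \<in> gamma t"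
  using Huniv_hclass hclass_in_gamma blocks_in_nodes nodes_butlast by blast

lemma gamma_nonempty:
  assumes "0 < k" and "A \<noteq> {}" and "t \<in> nodes"
  shows "gamma t \<noteq> {}"
proof -
  obtain a where "a \<in> A"
    using assms(2) by blast
  show ?thesis
  proof (cases "t = []")
    case True
    have "blocks n [(a, 1)] = [[(a, 1)]]"
      using n_pos by (subst blocks.simps) simp
    moreover have "[(a, 1)] \<in> Tuniv k A"
      using \<open>a \<in> A\<close> assms(1) by (simp add: Tuniv_def)
    ultimately have "hclass [(a, 1)] \<in> gamma t"
      using True hclass_in_gamma by fastforce
    then show ?thesis
      by blast
  next
    case False
    define i where "i = snd (last (last t))"
    have t: "greedy_blocks n t" "set (concat t) \<subseteq> A \<times> {1..k}"
      using assms(3) by (auto simp: nodes_def)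
    then have "last t \<noteq> []"
      using False by (simp add: greedy_blocks_def)
    then have "last (last t) \<in> set (concat t)"
      using False by (metis UN_I last_in_set set_concat)
    then have "i \<in> snd ` set (last t)" and "i \<in> {1..k}"
      using t(2) \<open>last t \<noteq> []\<close> by (auto simp: i_def)
    then have "greedy_blocks n (t @ [[(a, i)]])"
      using t(1) False n_pos by (auto simp: greedy_blocks_append basic_snoc_iff)
    then have "blocks n (concat t @ [(a, i)]) = t @ [[(a, i)]]"
      using blocks_concat [OF n_pos] by fastforce
    moreover have "concat t @ [(a, i)] \<in> Tuniv k A"
      using t(2) \<open>a \<in> A\<close> \<open>i \<in> {1..k}\<close> by (simp add: Tuniv_def)
    ultimately have "hclass (concat t @ [(a, i)]) \<in> gamma t"
      using hclass_in_gamma by fastforce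
    then show ?thesis
      by blast
  qed
qed

lemma beta_memE:
  assumes "P \<in> nodes" and "c \<in> beta P"
  obtains l j where "l \<in> last_occs (concat P)" and "j < length P"
    and "block_start P j < l" and "l \<le> block_start P (Suc j)"
    and "c = hclass (take l (concat P))" and "c \<in> gamma (take j P)"
proof -
  obtain l where l: "l \<in> last_occs (concat P)" "c = hclass (take l (concat P))"
    using assms(2) by (auto simp: beta_def)
  then have "0 < l" and "l \<le> length (concat P)"
    using last_occs_bounds by auto
  then obtain j where j: "j < length P" "block_start P j < l" "l \<le> block_start P (Suc j)"
    using block_index_exists by blast
  have "take l (concat P) \<in> Tuniv k A"
    using take_concat_in_Tuniv [OF assms(1) \<open>0 < l\<close> \<open>l \<le> length (concat P)\<close>] .
  moreover have "butlast (blocks n (take l (concat P))) = take j P"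
    using butlast_blocks_take_concat [OF n_pos _ j] assms(1) by (simp add: nodes_def)
  ultimately have "c \<in> gamma (take j P)"
    using l(2) hclass_in_gamma by metis
  then show ?thesis
    using that l j by blast
qed

lemma beta_gamma_strict_prefix:
  assumes "P \<in> nodes" and "c \<in> beta P" and "c \<in> gamma Q"
  shows "strict_prefix Q P"
proof -
  obtain j where "j < length P" and "c \<in> gamma (take j P)"
    using beta_memE [OF assms(1,2)] by metis
  then have "Q = take j P" and "length (take j P) < length P"
    using gamma_unique assms(3) by auto
  then show ?thesis
    by (metis take_is_prefix prefix_order.le_neq_trans nat_neq_iff)
qed

lemma beta_inter_gamma_subset:
  assumes "t' \<in> nodes" and "strict_prefix t t'"
  shows "beta t' \<inter> gamma t \<subseteq> (\<lambda>l. hclass (take l (concat t'))) `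
    (last_occs (concat t') \<inter> {block_start t' (length t) <.. block_start t' (Suc (length t))})"
proof
  fix c
  assume c: "c \<in> beta t' \<inter> gamma t"
  then obtain l j where l: "l \<in> last_occs (concat t')" "j < length t'"
    "block_start t' j < l" "l \<le> block_start t' (Suc j)"
    "c = hclass (take l (concat t'))" "c \<in> gamma (take j t')"
    using beta_memE [OF assms(1)] by blast
  then have "t = take j t'"
    using c gamma_unique by blast
  then have "j = length t"
    using l(2) by simp
  then show "c \<in> (\<lambda>l. hclass (take l (concat t'))) `
      (last_occs (concat t') \<inter> {block_start t' (length t) <.. block_start t' (Suc (length t))})"
    using l by auto
qed

lemma card_beta_inter_gamma_le:
  assumes "t' \<in> nodes" and "strict_prefix t t'"
  shows "card (beta t' \<inter> gamma t) \<le> n"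
proof -
  let ?J = "{block_start t' (length t) <.. block_start t' (Suc (length t))}"
  have t: "length t < length t'"
    using assms(2) prefix_length_less by blast
  have "card (beta t' \<inter> gamma t) \<le> card ((\<lambda>l. hclass (take l (concat t'))) ` ?J)"
    using beta_inter_gamma_subset [OF assms] by (intro card_mono) auto
  also have "\<dots> \<le> card ?J"
    by (rule card_image_le) simp
  also have "\<dots> = length (t' ! length t)"
    using block_start_Suc [OF t] by simp
  also have "\<dots> \<le> n"
    using greedy_blocks_nth [OF _ t] assms(1) by (simp add: nodes_def basic_def)
  finally show ?thesis .
qed

lemma beta_snoc_inter_gamma:
  assumes "t @ [b] \<in> nodes"
  shows "beta (t @ [b]) \<inter> gamma t =
    (\<lambda>l. hclass (take l (concat t @ b))) ` {length (concat t) <.. length (concat t) + length b}"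
    (is "_ = ?cl ` ?J")
proof
  have "block_start (t @ [b]) (length t) = length (concat t)"
    and "block_start (t @ [b]) (Suc (length t)) = length (concat t) + length b"
    and "concat (t @ [b]) = concat t @ b"
    and "strict_prefix t (t @ [b])"
    by (simp_all add: block_start_def strict_prefix_def)
  then have "beta (t @ [b]) \<inter> gamma t \<subseteq> ?cl ` (last_occs (concat t @ b) \<inter> ?J)"
    using beta_inter_gamma_subset [OF assms, of t] by (simp only:)
  also have "\<dots> \<subseteq> ?cl ` ?J"
    by blast
  finally show "beta (t @ [b]) \<inter> gamma t \<subseteq> ?cl ` ?J" .
next
  have greedy: "greedy_blocks n (t @ [b])"
    using assms by (simp add: nodes_def)
  show "?cl ` ?J \<subseteq> beta (t @ [b]) \<inter> gamma t"
  proof (rule image_subsetI)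
    fix l
    assume l: "l \<in> ?J"
    have "?J \<subseteq> last_occs (concat t @ b)"
      using greedy by (intro last_occs_distinct_suffix) (simp add: greedy_blocks_append basic_def)
    then have "?cl l \<in> beta (t @ [b])"
      using l unfolding beta_def by (intro image_eqI [where x = l]) auto
    moreover have "take l (concat t @ b) \<in> Tuniv k A"
      using take_concat_in_Tuniv [OF assms, of l] l by simp
    moreover have "butlast (blocks n (take l (concat t @ b))) = t"
      using butlast_blocks_take_concat [OF n_pos greedy, of "length t" l] l
      by (simp add: block_start_def)
    ultimately show "?cl l \<in> beta (t @ [b]) \<inter> gamma t"
      using hclass_in_gamma by fastforce
  qed
qed

lemma bags_snoc_down:
  assumes "t @ [b] \<in> nodes" and "c \<in> beta (t @ [b]) \<union> gamma (t @ [b])"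
    and "c \<in> gamma Q" and "Q \<noteq> t @ [b]"
  shows "c \<in> beta t \<union> gamma t"
proof (cases "Q = t")
  case True
  then show ?thesis
    using assms(3) by simp
next
  case False
  have "c \<in> beta (t @ [b])"
    using assms(2-4) gamma_unique by blast
  then obtain l j where l: "l \<in> last_occs (concat (t @ [b]))" "j < length (t @ [b])"
    "l \<le> block_start (t @ [b]) (Suc j)"
    "c = hclass (take l (concat (t @ [b])))" "c \<in> gamma (take j (t @ [b]))"
    using beta_memE [OF assms(1)] by blast
  then have "j \<noteq> length t"
    using assms(3) False gamma_unique by force
  then have "block_start (t @ [b]) (Suc j) \<le> block_start (t @ [b]) (length t)"
    using l(2) by (intro block_start_mono) simp
  then have "l \<le> length (concat t)"
    using l(3) by (simp add: block_start_def)
  moreover have "l \<in> last_occs (concat t @ b)"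
    using l(1) by simp
  ultimately have "l \<in> last_occs (concat t)" and "c = hclass (take l (concat t))"
    using l(4) last_occs_append_le by auto
  then show ?thesis
    by (simp add: beta_def)
qed

lemma tree_connected_bags:
  assumes "c \<in> Huniv n k A"
  shows "tree_connected nodes prefix {t \<in> nodes. c \<in> beta t \<union> gamma t}"
proof -
  define S where "S = {t \<in> nodes. c \<in> beta t \<union> gamma t}"
  define E where "E = {(u, v). u \<in> S \<and> v \<in> S \<and> (tree_child nodes prefix u v \<or> tree_child nodes prefix v u)}"
  obtain Q where "c \<in> gamma Q"
    using Huniv_in_gamma [OF assms] by blast
  have path: "(Q, t) \<in> E\<^sup>*" if "t \<in> S" for t
    using that
  proof (induction t rule: rev_induct)
    case Nil
    have "c \<notin> beta []"
      by (auto simp: beta_def last_occs_def)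
    then show ?case
      using Nil \<open>c \<in> gamma Q\<close> gamma_unique by (auto simp: S_def)
  next
    case (snoc b t)
    show ?case
    proof (cases "Q = t @ [b]")
      case False
      then have "t \<in> S"
        using snoc.prems bags_snoc_down \<open>c \<in> gamma Q\<close> nodes_butlast [of "t @ [b]"] by (auto simp: S_def)
      then have "(t, t @ [b]) \<in> E"
        using snoc.prems by (auto simp: E_def S_def tree_child_nodes_iff)
      then show ?thesis
        using snoc.IH \<open>t \<in> S\<close> by simp
    qed simp
  qed
  have sym: "sym (E\<^sup>*)"
    by (rule sym_rtrancl) (auto simp: E_def sym_def)
  have "(x, y) \<in> E\<^sup>*" if "x \<in> S" "y \<in> S" for x y
    using symD [OF sym path [OF that(1)]] path [OF that(2)] by (rule rtrancl_trans)
  moreover have "S \<subseteq> nodes"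
    by (auto simp: S_def)
  ultimately show ?thesis
    unfolding tree_connected_def S_def [symmetric] E_def [symmetric] by blast
qed

lemma Trel_in_beta:
  assumes "ss \<in> Trel k A I R" and "x \<in> set ss" and "\<forall>z\<in>set ss. length z \<le> length x"
    and "y \<in> set ss"
  shows "hclass y \<in> beta (blocks n x)"
proof -
  have "prefix y x \<or> prefix x y" and "y \<noteq> []"
    using assms(1,2,4) by (auto simp: Trel_def Tuniv_def)
  then have "prefix y x"
    using assms(3,4) by (auto simp: prefix_def)
  moreover have "\<forall>u. prefix y u \<and> prefix u x \<and> u \<noteq> y \<longrightarrow> snd (last u) \<noteq> snd (last y)"
    using assms(1,2,4) \<open>prefix y x\<close> by (simp add: Trel_def)
  ultimately have "length y \<in> last_occs x"
    using last_occs_prefix \<open>y \<noteq> []\<close> by blast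
  moreover have "y = take (length y) x"
    using \<open>prefix y x\<close> by (metis append_eq_conv_conj prefix_def)
  ultimately show ?thesis
    unfolding beta_def concat_blocks by (metis image_eqI)
qed

lemma Hrel_in_beta:
  assumes "cs \<in> Hrel n k A I R"
  shows "\<exists>t\<in>nodes. set cs \<subseteq> beta t"
proof -
  obtain ss where ss: "ss \<in> Trel k A I R" "list_all2 (\<in>) ss cs" and cs: "set cs \<subseteq> Huniv n k A"
    using assms by (auto simp: Hrel_def)
  show ?thesis
  proof (cases "ss = []")
    case True
    then show ?thesis
      using ss(2) Nil_in_nodes by auto
  next
    case False
    then have "Max (length ` set ss) \<in> length ` set ss"
      by (intro Max_in) auto
    then obtain x where "x \<in> set ss" and "length x = Max (length ` set ss)"
      by auto
    then have x: "x \<in> set ss" "\<forall>z\<in>set ss. length z \<le> length x"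
      by simp_all
    have "c \<in> beta (blocks n x)" if "c \<in> set cs" for c
    proof -
      obtain i where "i < length cs" and "c = cs ! i"
        using \<open>c \<in> set cs\<close> by (metis in_set_conv_nth)
      then have "ss ! i \<in> set ss" and "ss ! i \<in> c"
        using list_all2_nthD [OF ss(2)] list_all2_lengthD [OF ss(2)] by auto
      moreover have "c = hclass (ss ! i)"
        using Huniv_mem_hclass cs that calculation(2) by blast
      ultimately show ?thesis
        using Trel_in_beta [OF ss(1) x] by simp
    qed
    moreover have "x \<in> Tuniv k A"
      using ss(1) x(1) by (auto simp: Trel_def)
    ultimately show ?thesis
      using blocks_in_nodes by blast
  qed
qed

lemma inj_on_if_card_image_Un:
  assumes "finite J" and "finite Y" and "card J + card Y \<le> card (f ` (J \<union> Y))"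
  shows "inj_on f J"
proof -
  have "card (f ` (J \<union> Y)) \<le> card (f ` J) + card Y"
    using card_Un_le [of "f ` J" "f ` Y"] card_image_le [OF assms(2), of f] by (simp add: image_Un)
  then have "card (f ` J) = card J"
    using assms(3) card_image_le [OF assms(1), of f] by linarith
  then show ?thesis
    by (rule eq_card_imp_inj_on [OF assms(1)])
qed

lemma inj_on_last_block:
  assumes "t @ [b] \<in> nodes" and "k \<le> card (beta (t @ [b]))"
  shows "inj_on (\<lambda>l. hclass (take l (concat t @ b))) {length (concat t) <.. length (concat t) + length b}"
    (is "inj_on ?cl ?J")
proof -
  define X where "X = concat t @ b"
  define Y where "Y = last_occs X \<inter> {..length (concat t)}"
  have "?J \<subseteq> last_occs X"
    using assms(1) unfolding X_def
    by (intro last_occs_distinct_suffix) (simp add: nodes_def greedy_blocks_append basic_def)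
  moreover have "last_occs X \<subseteq> ?J \<union> Y"
    using last_occs_bounds [of _ X] by (auto simp: X_def Y_def)
  ultimately have JY: "?J \<union> Y = last_occs X"
    by (auto simp: Y_def)
  have "card ?J + card Y = card (last_occs X)"
    unfolding JY [symmetric] by (rule card_Un_disjoint [symmetric]) (auto simp: Y_def finite_last_occs)
  also have "\<dots> \<le> k"
    using card_last_occs_nodes [OF assms(1)] by (simp add: X_def)
  also have "\<dots> \<le> card (?cl ` (?J \<union> Y))"
    using assms(2) unfolding JY by (simp add: beta_def X_def)
  finally show ?thesis
    by (rule inj_on_if_card_image_Un [rotated 2]) (simp_all add: Y_def finite_last_occs)
qed

lemma greedy_blocks_short_block:
  assumes "greedy_blocks n (P @ [b, b'])" and "length b < n"
  obtains q where "q < length b" and "snd (b ! q) = snd (hd b')"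
proof -
  have "basic n b" and "\<not> basic n (b @ [hd b'])"
    using assms(1) by (simp_all add: greedy_blocks_append greedy_blocks_Cons)
  then have "snd (hd b') \<in> snd ` set b"
    using assms(2) by (metis basic_snoc_iff prod.collapse)
  then show ?thesis
    using that by (metis imageE in_set_conv_nth)
qed

lemma hclass_last_block_notin_beta:
  assumes "t @ [b, b'] \<in> nodes" and "l0 \<in> {length (concat t) <.. length (concat t) + length b}"
    and "inj_on (\<lambda>l. hclass (take l (concat t @ b))) {length (concat t) <.. length (concat t) + length b}"
    and "l0 \<notin> last_occs (concat t @ b @ b')"
  shows "hclass (take l0 (concat t @ b)) \<notin> beta (t @ [b, b'])"
proof
  let ?J = "{length (concat t) <.. length (concat t) + length b}"
  assume "hclass (take l0 (concat t @ b)) \<in> beta (t @ [b, b'])"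
  moreover have "hclass (take l0 (concat t @ b)) \<in> gamma t"
    using beta_snoc_inter_gamma [of t b] nodes_butlast [OF assms(1)] assms(2) by (auto simp: butlast_append)
  moreover have "strict_prefix t (t @ [b, b'])"
    by (simp add: strict_prefix_def)
  moreover have "block_start (t @ [b, b']) (length t) = length (concat t)"
    and "block_start (t @ [b, b']) (Suc (length t)) = length (concat t) + length b"
    by (simp_all add: block_start_def)
  ultimately obtain l where l: "l \<in> last_occs (concat t @ b @ b')" "l \<in> ?J"
      "hclass (take l0 (concat t @ b)) = hclass (take l (concat t @ b @ b'))"
    using beta_inter_gamma_subset [OF assms(1), of t] by auto
  then have "l = l0"
    using assms(2,3) by (auto simp: inj_on_def)
  then show False
    using l(1) assms(4) by simp
qed

lemma grandchild_leaves_beta: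
  assumes "t @ [b, b'] \<in> nodes" and "k \<le> card (beta (t @ [b]))"
    and "card (beta (t @ [b]) \<inter> gamma t) \<noteq> n"
  shows "(gamma t \<inter> beta (t @ [b])) - beta (t @ [b, b']) \<noteq> {}"
proof -
  define L where "L = length (concat t)"
  define cl where "cl = (\<lambda>l. hclass (take l (concat t @ b)))"
  have tb: "t @ [b] \<in> nodes"
    using nodes_butlast [OF assms(1)] by (simp add: butlast_append)
  have greedy: "greedy_blocks n (t @ [b, b'])"
    using assms(1) by (simp add: nodes_def)
  have inj: "inj_on cl {L <.. L + length b}"
    using inj_on_last_block [OF tb assms(2)] unfolding cl_def L_def .
  have beta_gamma: "beta (t @ [b]) \<inter> gamma t = cl ` {L <.. L + length b}"
    using beta_snoc_inter_gamma [OF tb] unfolding cl_def L_def .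
  then have "length b \<noteq> n"
    using assms(3) card_image [OF inj] by simp
  moreover have "length b \<le> n"
    using greedy by (simp add: greedy_blocks_append greedy_blocks_Cons basic_def)
  ultimately obtain q where q: "q < length b" "snd (b ! q) = snd (hd b')"
    using greedy_blocks_short_block [OF greedy] by force
  define l0 where "l0 = L + Suc q"
  have l0: "l0 \<in> {L <.. L + length b}"
    using q(1) by (simp add: l0_def)
  have "l0 \<notin> last_occs ((concat t @ b) @ b')"
  proof (rule last_occs_append_not)
    have "(concat t @ b) ! (l0 - 1) = b ! q"
      by (simp add: L_def l0_def nth_append)
    then show "snd ((concat t @ b) ! (l0 - 1)) \<in> snd ` set b'"
      using q(2) greedy by (simp add: greedy_blocks_append greedy_blocks_Cons)
  qed (use l0 in \<open>simp_all add: L_def\<close>)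
  then have "cl l0 \<notin> beta (t @ [b, b'])"
    using hclass_last_block_notin_beta [OF assms(1)] l0 inj by (simp add: cl_def L_def)
  then show ?thesis
    using beta_gamma l0 by blast
qed

lemma ext_tree_decomp_nodes: "ext_tree_decomp (Huniv n k A) (Hrel n k A I) nodes prefix beta gamma"
  unfolding ext_tree_decomp_def tree_decomp_def
proof (intro conjI ballI allI impI)
  show "is_tree nodes prefix"
    by (rule is_tree_nodes)
  show "\<And>c. c \<in> Huniv n k A \<Longrightarrow> \<exists>t\<in>nodes. c \<in> beta t \<union> gamma t"
    using Huniv_in_gamma by blast
  show "\<And>c. c \<in> Huniv n k A \<Longrightarrow> tree_connected nodes prefix {t \<in> nodes. c \<in> beta t \<union> gamma t}"
    by (rule tree_connected_bags)
  show "\<And>R cs. cs \<in> Hrel n k A I R \<Longrightarrow> \<exists>t\<in>nodes. set cs \<subseteq> beta t \<union> gamma t"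
    using Hrel_in_beta by (meson le_supI1)
  show "\<And>t t' c. t \<in> nodes \<Longrightarrow> t' \<in> nodes \<Longrightarrow> c \<in> gamma t \<and> c \<in> beta t' \<union> gamma t' \<Longrightarrow> prefix t t'"
    using gamma_unique beta_gamma_strict_prefix by (metis Un_iff prefix_order.order_refl strict_prefix_def)
qed (use beta_subset_Huniv gamma_subset_Huniv in blast)+

lemma etd_width_le_nodes: "etd_width_le nodes beta k"
  unfolding etd_width_le_def using finite_beta card_beta_le by blast

lemma etd_arity_le_nodes: "etd_arity_le nodes prefix beta gamma (Hrel n k A I) n"
proof -
  define w where "w = etd_width nodes beta"
  have "finite ((\<lambda>t. card (beta t)) ` nodes)"
    by (rule finite_subset [of _ "{..k}"]) (use card_beta_le in auto)
  then have width: "card (beta t) \<le> w" if "t \<in> nodes" for t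
    using that unfolding w_def etd_width_def by (intro Max_ge) simp_all
  have "card (beta t' \<inter> gamma t) \<le> min n w" if "t' \<in> nodes" and "tree_less prefix t t'" for t t'
  proof -
    have "card (beta t' \<inter> gamma t) \<le> n"
      using that by (intro card_beta_inter_gamma_le) (auto simp: tree_less_def strict_prefix_def)
    moreover have "card (beta t' \<inter> gamma t) \<le> card (beta t')"
      by (intro card_mono finite_beta) auto
    ultimately show ?thesis
      using width [OF that(1)] by simp
  qed
  moreover have "\<exists>t\<in>nodes. set cs \<subseteq> beta t \<union> gamma t \<and> card (set cs \<inter> gamma t) \<le> min n w"
    if cs: "cs \<in> Hrel n k A I R" for cs R
  proof -
    obtain t where t: "t \<in> nodes" "set cs \<subseteq> beta t"
      using Hrel_in_beta [OF cs] by blast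
    then have "set cs \<inter> gamma t = {}"
      using beta_gamma_strict_prefix by blast
    then show ?thesis
      using t by auto
  qed
  ultimately have "arity_cond nodes prefix beta gamma (Hrel n k A I) (min n w)"
    unfolding arity_cond_def by blast
  then show ?thesis
    unfolding etd_arity_le_def using w_def by (intro exI [of _ "min n w"]) simp
qed

lemma structured_nodes:
  assumes "0 < k" and "A \<noteq> {}"
  shows "structured n k (Huniv n k A) nodes prefix beta gamma"
  unfolding structured_def
proof (intro conjI ballI allI impI)
  show "\<And>c. c \<in> Huniv n k A \<Longrightarrow> \<exists>t\<in>nodes. c \<in> gamma t"
    by (rule Huniv_in_gamma)
  show "\<And>t. t \<in> nodes \<Longrightarrow> gamma t \<noteq> {}"
    by (rule gamma_nonempty [OF assms])
  show "beta t' \<inter> gamma t \<noteq> {}" if child: "tree_child nodes prefix t t'" for t t'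
  proof -
    obtain b where b: "t' = t @ [b]" "t @ [b] \<in> nodes"
      using child unfolding tree_child_nodes_iff by blast
    then have "length (concat t) + length b \<in> {length (concat t) <.. length (concat t) + length b}"
      by (simp add: nodes_def greedy_blocks_append)
    then show ?thesis
      using beta_snoc_inter_gamma [OF b(2)] b(1) by blast
  qed
  show "card (beta t' \<inter> gamma t) = n \<or> card (beta t') < k \<or> (gamma t \<inter> beta t') - beta t'' \<noteq> {}"
    if "tree_child nodes prefix t t' \<and> tree_child nodes prefix t' t''" for t t' t''
    using that grandchild_leaves_beta by (auto simp: tree_child_nodes_iff not_less)
qed

end

theorem lemma4p8:
  fixes ar :: "'r \<Rightarrow> nat" and A :: "'a set" and I :: "'r \<Rightarrow> 'a list set" and n k :: nat
  assumes "0 < n" and "n \<le> k"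
    and "finite A" and "A \<noteq> {}" and "sig_struct ar A I"
  shows "\<exists>(T :: ('a \<times> nat) list list set) le \<beta> \<gamma>.
           ext_tree_decomp (Huniv n k A) (Hrel n k A I) T le \<beta> \<gamma> \<and>
           etd_width_le T \<beta> k \<and>
           etd_arity_le T le \<beta> \<gamma> (Hrel n k A I) n \<and>
           structured n k (Huniv n k A) T le \<beta> \<gamma>"
proof -
  interpret pebble_quotient n k A
    using assms(1) by unfold_locales
  have "0 < k"
    using assms(1,2) by simp
  then show ?thesis
    using ext_tree_decomp_nodes etd_width_le_nodes etd_arity_le_nodes structured_nodes assms(4) by blast
qed

end
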